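(* Let $G$ be a threshold graph and let $\lambda\neq 0$ be a real number. Then there exists a matrix $M\in S(G)$ such that $\mathrm{DSpec}(M)\subseteq\{-\lambda,0,\lambda,2\lambda\}$. In particular, $q(G)\le 4$.
   Context: A threshold graph is a (simple, not necessarily connected) graph obtained from a single vertex by repeatedly adding either a new isolated vertex or a new dominating vertex (a vertex adjacent to all previously added vertices). For a simple graph $G$ on vertices $v_1,\dots,v_n$, $S(G)$ denotes the set of all real symmetric $n\times n$ matrices $A=(a_{ij})$ such that for all $i\neq j$, $a_{ij}\neq 0$ if and only if $\{v_i,v_j\}$ is an edge of $G$ (diagonal entries are arbitrary). For a square matrix $A$, $\mathrm{DSpec}(A)$ is the set of distinct eigenvalues of $A$, and $q(G)=\min\{|\mathrm{DSpec}(A)| : A\in S(G)\}$. *)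

theory Defs
  imports Complex_Main
begin

text \<open>A graph is given by a vertex set V and an edge relation E (only pairs of
distinct vertices of V matter).\<close>
inductive threshold_graph :: "'a set \<Rightarrow> ('a \<Rightarrow> 'a \<Rightarrow> bool) \<Rightarrow> bool" where
  single: "threshold_graph {v} E"
| add_isolated: "\<lbrakk>threshold_graph V E; v \<notin> V; \<forall>u\<in>V. \<not> E v u \<and> \<not> E u v\<rbrakk>
     \<Longrightarrow> threshold_graph (insert v V) E"
| add_dominating: "\<lbrakk>threshold_graph V E; v \<notin> V; \<forall>u\<in>V. E v u \<and> E u v\<rbrakk>
     \<Longrightarrow> threshold_graph (insert v V) E"

text \<open>Matrices indexed by the vertex set V (entries outside V are irrelevant).
S(G): real symmetric matrices whose off-diagonal nonzero pattern is the edge set.\<close>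
definition in_S :: "'a set \<Rightarrow> ('a \<Rightarrow> 'a \<Rightarrow> bool) \<Rightarrow> ('a \<Rightarrow> 'a \<Rightarrow> real) \<Rightarrow> bool" where
  "in_S V E A \<longleftrightarrow> (\<forall>i\<in>V. \<forall>j\<in>V. A i j = A j i) \<and>
     (\<forall>i\<in>V. \<forall>j\<in>V. i \<noteq> j \<longrightarrow> (A i j \<noteq> 0 \<longleftrightarrow> E i j))"

definition is_eigenvalue :: "'a set \<Rightarrow> ('a \<Rightarrow> 'a \<Rightarrow> real) \<Rightarrow> complex \<Rightarrow> bool" where
  "is_eigenvalue V A \<mu> \<longleftrightarrow> (\<exists>x :: 'a \<Rightarrow> complex. (\<exists>i\<in>V. x i \<noteq> 0) \<and>
     (\<forall>i\<in>V. (\<Sum>j\<in>V. complex_of_real (A i j) * x j) = \<mu> * x i))"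

definition DSpec :: "'a set \<Rightarrow> ('a \<Rightarrow> 'a \<Rightarrow> real) \<Rightarrow> complex set" where
  "DSpec V A = {\<mu>. is_eigenvalue V A \<mu>}"

definition q_min :: "'a set \<Rightarrow> ('a \<Rightarrow> 'a \<Rightarrow> bool) \<Rightarrow> nat" where
  "q_min V E = (LEAST k. \<exists>A. in_S V E A \<and> card (DSpec V A) = k)"

end

theory Submission
  imports Defs
begin

text \<open>Induct along the construction, maintaining a matrix A in S(G) with spectrum in
{-l, 0, l, 2l} together with a nowhere-zero eigenvector x of A for an eigenvalue
\<mu> \<in> {0, l}. A new vertex v is added by bordering A with a column b and the diagonal
entry \<mu>: b = 0 for an isolated vertex and b a multiple of x with |b| = |l| for a
dominating one. Since A is symmetric and A b = \<mu> b, an eigenvector of the bordered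
matrix either vanishes at v, and so is an old eigenvector, or has eigenvalue \<mu>' with
(\<mu>' - \<mu>)^2 = |b|^2, i.e. \<mu>' = \<mu> \<plusminus> l. Extending x by a suitable value at v yields a
nowhere-zero eigenvector for 0 or l again.\<close>

definition border :: "'a \<Rightarrow> real \<Rightarrow> ('a \<Rightarrow> real) \<Rightarrow> ('a \<Rightarrow> 'a \<Rightarrow> real) \<Rightarrow> 'a \<Rightarrow> 'a \<Rightarrow> real" where
  "border v d b A = (\<lambda>i j. if i = v then (if j = v then d else b j) else if j = v then b i else A i j)"

definition eigenvector_on :: "'a set \<Rightarrow> ('a \<Rightarrow> 'a \<Rightarrow> real) \<Rightarrow> real \<Rightarrow> ('a \<Rightarrow> real) \<Rightarrow> bool" where
  "eigenvector_on V A \<mu> x \<longleftrightarrow> (\<forall>i\<in>V. (\<Sum>j\<in>V. A i j * x j) = \<mu> * x i)"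

lemma border_row:
  fixes z :: "'a \<Rightarrow> 'b::real_algebra_1"
  assumes "finite V" "v \<notin> V" "i \<in> V"
  shows "(\<Sum>j\<in>insert v V. of_real (border v d b A i j) * z j)
           = of_real (b i) * z v + (\<Sum>j\<in>V. of_real (A i j) * z j)"
proof -
  have "(\<Sum>j\<in>V. of_real (border v d b A i j) * z j) = (\<Sum>j\<in>V. of_real (A i j) * z j)"
    using assms by (intro sum.cong) (auto simp: border_def)
  then show ?thesis
    using assms by (auto simp: border_def)
qed

lemma border_row_new:
  fixes z :: "'a \<Rightarrow> 'b::real_algebra_1"
  assumes "finite V" "v \<notin> V"
  shows "(\<Sum>j\<in>insert v V. of_real (border v d b A v j) * z j)
           = of_real d * z v + (\<Sum>j\<in>V. of_real (b j) * z j)"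
proof -
  have "(\<Sum>j\<in>V. of_real (border v d b A v j) * z j) = (\<Sum>j\<in>V. of_real (b j) * z j)"
    using assms by (intro sum.cong) (auto simp: border_def)
  then show ?thesis
    using assms by (simp add: border_def)
qed

lemma in_S_border:
  assumes "in_S V E A" "v \<notin> V" "\<forall>u\<in>V. (E v u \<longleftrightarrow> b u \<noteq> 0) \<and> (E u v \<longleftrightarrow> b u \<noteq> 0)"
  shows "in_S (insert v V) E (border v d b A)"
  using assms unfolding in_S_def border_def by auto

lemma eigenvector_on_inner:
  fixes z :: "'a \<Rightarrow> complex"
  assumes sym: "\<forall>i\<in>V. \<forall>j\<in>V. A i j = A j i" and b: "eigenvector_on V A \<mu> b"
  shows "(\<Sum>i\<in>V. of_real (b i) * (\<Sum>j\<in>V. of_real (A i j) * z j))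
           = of_real \<mu> * (\<Sum>j\<in>V. of_real (b j) * z j)"
proof -
  have "(\<Sum>i\<in>V. of_real (b i) * (\<Sum>j\<in>V. of_real (A i j) * z j))
      = (\<Sum>j\<in>V. \<Sum>i\<in>V. of_real (A j i * b i) * z j)"
    using sym by (subst sum.swap) (auto simp: sum_distrib_left mult_ac intro!: sum.cong)
  also have "\<dots> = (\<Sum>j\<in>V. of_real (\<Sum>i\<in>V. A j i * b i) * z j)"
    by (simp add: of_real_sum sum_distrib_right)
  also have "\<dots> = (\<Sum>j\<in>V. of_real \<mu> * (of_real (b j) * z j))"
    using b by (intro sum.cong refl) (simp add: eigenvector_on_def)
  finally show ?thesis
    by (simp add: sum_distrib_left)
qed

lemma DSpec_border_subset:
  assumes fin: "finite V" and v: "v \<notin> V" and sym: "\<forall>i\<in>V. \<forall>j\<in>V. A i j = A j i"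
    and b: "eigenvector_on V A d b"
  shows "DSpec (insert v V) (border v d b A)
           \<subseteq> DSpec V A \<union> {\<mu>. (\<mu> - of_real d)\<^sup>2 = of_real (\<Sum>j\<in>V. (b j)\<^sup>2)}"
proof
  fix \<mu> assume "\<mu> \<in> DSpec (insert v V) (border v d b A)"
  then obtain z where nz: "\<exists>i\<in>insert v V. z i \<noteq> 0"
    and eq: "\<forall>i\<in>insert v V. (\<Sum>j\<in>insert v V. of_real (border v d b A i j) * z j) = \<mu> * z i"
    by (auto simp: DSpec_def is_eigenvalue_def)
  define B where "B = (\<Sum>j\<in>V. of_real (b j) * z j)"
  have row: "(\<Sum>j\<in>V. of_real (A i j) * z j) = \<mu> * z i - of_real (b i) * z v" if "i \<in> V" for i
    using eq border_row[OF fin v that, of d b A z] that by (auto simp: algebra_simps)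
  have row_new: "B = (\<mu> - of_real d) * z v"
    using eq border_row_new[OF fin v, of d b A z] by (auto simp: B_def algebra_simps)
  show "\<mu> \<in> DSpec V A \<union> {\<mu>. (\<mu> - of_real d)\<^sup>2 = of_real (\<Sum>j\<in>V. (b j)\<^sup>2)}"
  proof (cases "z v = 0")
    case True
    then have "is_eigenvalue V A \<mu>"
      using nz row unfolding is_eigenvalue_def by auto
    then show ?thesis by (simp add: DSpec_def)
  next
    case False
    \<comment> \<open>pair the rows indexed by V with b; as A is symmetric and A b = d b, A drops out\<close>
    have "of_real d * B = (\<Sum>i\<in>V. of_real (b i) * (\<mu> * z i - of_real (b i) * z v))"
      using eigenvector_on_inner[OF sym b, of z] row by (simp add: B_def)
    also have "\<dots> = \<mu> * B - of_real (\<Sum>j\<in>V. (b j)\<^sup>2) * z v"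
      by (simp add: B_def algebra_simps power2_eq_square sum_subtractf sum_distrib_left sum_distrib_right)
    finally have "(\<mu> - of_real d)\<^sup>2 * z v = of_real (\<Sum>j\<in>V. (b j)\<^sup>2) * z v"
      using row_new by (simp add: algebra_simps power2_eq_square)
    then show ?thesis using False by simp
  qed
qed

lemma eigenvector_on_border:
  assumes fin: "finite V" and v: "v \<notin> V" and x: "eigenvector_on V A d x"
    and b: "\<forall>j\<in>V. b j = c * x j" and t: "c * (\<Sum>j\<in>V. (x j)\<^sup>2) = c * t\<^sup>2"
  shows "eigenvector_on (insert v V) (border v d b A) (d + c * t) (x(v := t))"
  unfolding eigenvector_on_def
proof
  fix i assume "i \<in> insert v V"
  then consider "i = v" | "i \<in> V" by blast
  then show "(\<Sum>j\<in>insert v V. border v d b A i j * (x(v := t)) j) = (d + c * t) * (x(v := t)) i"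
  proof cases
    case 1
    have "(\<Sum>j\<in>V. b j * (x(v := t)) j) = c * (\<Sum>j\<in>V. (x j)\<^sup>2)"
      using b v by (auto simp: sum_distrib_left power2_eq_square mult_ac intro!: sum.cong)
    then show ?thesis
      using 1 t border_row_new[OF fin v, of d b A "x(v := t)"]
      by (simp add: algebra_simps power2_eq_square)
  next
    case 2
    have "(\<Sum>j\<in>V. A i j * (x(v := t)) j) = (\<Sum>j\<in>V. A i j * x j)"
      using v by (intro sum.cong) auto
    also have "\<dots> = d * x i"
      using x 2 by (simp add: eigenvector_on_def)
    finally have "(\<Sum>j\<in>V. A i j * (x(v := t)) j) = d * x i" .
    then show ?thesis
      using 2 v b border_row[OF fin v 2, of d b A "x(v := t)"]
      by (auto simp: algebra_simps)
  qed
qed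

lemma threshold_graph_finite: "threshold_graph V E \<Longrightarrow> finite V"
  by (induction rule: threshold_graph.induct) auto

lemma threshold_graph_nonempty: "threshold_graph V E \<Longrightarrow> V \<noteq> {}"
  by (induction rule: threshold_graph.induct) auto

lemma add_isolated_vertex:
  assumes fin: "finite V" and v: "v \<notin> V" and A: "in_S V E A"
    and iso: "\<forall>u\<in>V. \<not> E v u \<and> \<not> E u v" and x: "eigenvector_on V A \<mu> x"
  shows "in_S (insert v V) E (border v \<mu> (\<lambda>_. 0) A)"
    and "DSpec (insert v V) (border v \<mu> (\<lambda>_. 0) A) \<subseteq> DSpec V A \<union> {of_real \<mu>}"
    and "eigenvector_on (insert v V) (border v \<mu> (\<lambda>_. 0) A) \<mu> (x(v := 1))"
proof -
  show "in_S (insert v V) E (border v \<mu> (\<lambda>_. 0) A)"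
    using in_S_border[OF A v] iso by simp
  have sym: "\<forall>i\<in>V. \<forall>j\<in>V. A i j = A j i"
    using A by (simp add: in_S_def)
  have "eigenvector_on V A \<mu> (\<lambda>_. 0)"
    by (simp add: eigenvector_on_def)
  from DSpec_border_subset[OF fin v sym this]
  show "DSpec (insert v V) (border v \<mu> (\<lambda>_. 0) A) \<subseteq> DSpec V A \<union> {of_real \<mu>}"
    by auto
  show "eigenvector_on (insert v V) (border v \<mu> (\<lambda>_. 0) A) \<mu> (x(v := 1))"
    using eigenvector_on_border[OF fin v x, of "\<lambda>_. 0" 0 1] by simp
qed

lemma add_dominating_vertex:
  assumes fin: "finite V" and ne: "V \<noteq> {}" and v: "v \<notin> V" and A: "in_S V E A"
    and dom: "\<forall>u\<in>V. E v u \<and> E u v"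
    and x: "eigenvector_on V A \<mu> x" and x_nz: "\<forall>i\<in>V. x i \<noteq> 0" and s: "s \<noteq> 0"
  obtains b x' where "in_S (insert v V) E (border v \<mu> b A)"
    and "DSpec (insert v V) (border v \<mu> b A) \<subseteq> DSpec V A \<union> {of_real (\<mu> - s), of_real (\<mu> + s)}"
    and "eigenvector_on (insert v V) (border v \<mu> b A) (\<mu> + s) x'"
    and "\<forall>i\<in>insert v V. x' i \<noteq> 0"
proof
  define r where "r = sqrt (\<Sum>j\<in>V. (x j)\<^sup>2)"
  obtain u where "u \<in> V"
    using ne by blast
  then have "(\<Sum>j\<in>V. (x j)\<^sup>2) > 0"
    using fin x_nz by (intro sum_pos2[of V u]) auto
  then have r_pos: "r > 0" and r_sq: "r\<^sup>2 = (\<Sum>j\<in>V. (x j)\<^sup>2)"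
    by (simp_all add: r_def)
  define b where "b = (\<lambda>j. s / r * x j)"
  show "in_S (insert v V) E (border v \<mu> b A)"
    using in_S_border[OF A v] dom x_nz s r_pos by (simp add: b_def)
  have sym: "\<forall>i\<in>V. \<forall>j\<in>V. A i j = A j i"
    using A by (simp add: in_S_def)
  have "(\<Sum>j\<in>V. A i j * b j) = s / r * (\<Sum>j\<in>V. A i j * x j)" for i
    by (simp add: b_def sum_distrib_left mult_ac)
  then have b_eig: "eigenvector_on V A \<mu> b"
    using x by (simp add: eigenvector_on_def b_def)
  have "(\<Sum>j\<in>V. (b j)\<^sup>2) = s\<^sup>2 / r\<^sup>2 * (\<Sum>j\<in>V. (x j)\<^sup>2)"
    by (simp add: b_def power_mult_distrib power_divide sum_distrib_left)
  then have b_sq: "(\<Sum>j\<in>V. (b j)\<^sup>2) = s\<^sup>2"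
    using r_pos by (simp flip: r_sq)
  show "DSpec (insert v V) (border v \<mu> b A) \<subseteq> DSpec V A \<union> {of_real (\<mu> - s), of_real (\<mu> + s)}"
    using DSpec_border_subset[OF fin v sym b_eig] by (auto simp: b_sq power2_eq_iff algebra_simps)
  show "eigenvector_on (insert v V) (border v \<mu> b A) (\<mu> + s) (x(v := r))"
    using eigenvector_on_border[OF fin v x, of b "s / r" r] r_pos r_sq by (simp add: b_def)
  show "\<forall>i\<in>insert v V. (x(v := r)) i \<noteq> 0"
    using x_nz r_pos by simp
qed

lemma threshold_graph_realization:
  assumes "threshold_graph V E" and l: "l \<noteq> 0"
  shows "\<exists>A \<mu> x. in_S V E A \<and> DSpec V A \<subseteq> complex_of_real ` {-l, 0, l, 2*l}
           \<and> \<mu> \<in> {0, l} \<and> eigenvector_on V A \<mu> x \<and> (\<forall>i\<in>V. x i \<noteq> 0)"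
  using assms(1)
proof induction
  case (single v E)
  \<comment> \<open>a single vertex is an isolated vertex added to the empty graph\<close>
  have "in_S {} E A" "DSpec {} A = {}" "eigenvector_on {} A 0 x" for A x
    by (simp_all add: in_S_def DSpec_def is_eigenvalue_def eigenvector_on_def)
  with add_isolated_vertex[of "{}" v E _ 0] show ?case
    by fastforce
next
  case (add_isolated V E v)
  then obtain A \<mu> x where A: "in_S V E A" "DSpec V A \<subseteq> complex_of_real ` {-l, 0, l, 2*l}"
    and \<mu>: "\<mu> \<in> {0, l}" and x: "eigenvector_on V A \<mu> x" "\<forall>i\<in>V. x i \<noteq> 0"
    by blast
  note new = add_isolated_vertex[OF threshold_graph_finite[OF add_isolated(1)] add_isolated(2) A(1)
      add_isolated(3) x(1)]
  have "\<forall>i\<in>insert v V. (x(v := 1)) i \<noteq> 0"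
    using x(2) by simp
  with new A(2) \<mu> show ?case
    by blast
next
  case (add_dominating V E v)
  then obtain A \<mu> x where A: "in_S V E A" "DSpec V A \<subseteq> complex_of_real ` {-l, 0, l, 2*l}"
    and \<mu>: "\<mu> \<in> {0, l}" and x: "eigenvector_on V A \<mu> x" "\<forall>i\<in>V. x i \<noteq> 0"
    by blast
  \<comment> \<open>the sign of s is chosen so that the new eigenvalue \<mu> + s = l - \<mu> is again 0 or l\<close>
  define s where "s = l - 2 * \<mu>"
  have "s \<noteq> 0"
    using \<mu> l by (auto simp: s_def)
  then obtain b x' where "in_S (insert v V) E (border v \<mu> b A)"
    and "DSpec (insert v V) (border v \<mu> b A) \<subseteq> DSpec V A \<union> {of_real (\<mu> - s), of_real (\<mu> + s)}"
    and "eigenvector_on (insert v V) (border v \<mu> b A) (\<mu> + s) x'" "\<forall>i\<in>insert v V. x' i \<noteq> 0"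
    using add_dominating_vertex[OF threshold_graph_finite[OF add_dominating(1)]
        threshold_graph_nonempty[OF add_dominating(1)] add_dominating(2) A(1) add_dominating(3) x]
    by blast
  moreover have "\<mu> + s \<in> {0, l}" "{\<mu> - s, \<mu> + s} \<subseteq> {-l, 0, l, 2*l}"
    using \<mu> by (auto simp: s_def)
  ultimately show ?case
    using A(2) by blast
qed

theorem theorem1:
  fixes V :: "'a set" and E :: "'a \<Rightarrow> 'a \<Rightarrow> bool" and l :: real
  assumes "threshold_graph V E" and "l \<noteq> 0"
  shows "(\<exists>M. in_S V E M \<and> DSpec V M \<subseteq> complex_of_real ` {-l, 0, l, 2*l})
         \<and> q_min V E \<le> 4"
proof -
  obtain M where M: "in_S V E M" and spec: "DSpec V M \<subseteq> complex_of_real ` {-l, 0, l, 2*l}"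
    using threshold_graph_realization[OF assms] by blast
  have "card (DSpec V M) \<le> card (complex_of_real ` {-l, 0, l, 2*l})"
    using spec by (intro card_mono) auto
  also have "\<dots> \<le> card {-l, 0, l, 2*l}"
    by (rule card_image_le) simp
  also have "\<dots> \<le> 4"
    by (simp add: card_insert_if)
  finally have "card (DSpec V M) \<le> 4" .
  moreover have "q_min V E \<le> card (DSpec V M)"
    unfolding q_min_def using M by (intro Least_le) blast
  ultimately show ?thesis
    using M spec by auto
qed

end
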